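(* Let $\mathbb X=\langle X,\rho\rangle$ and $\mathbb Y=\langle Y,\sigma\rangle$ be structures of size $\omega_1$ with $\rho,\sigma$ equivalence relations, each having countably infinitely many singleton classes and exactly one class of size $n$ for each $n\ge2$, such that the only infinite class of $\mathbb X$ is a single class $X'$ with $|X'|=\omega_1$, and the infinite classes of $\mathbb Y$ are exactly two classes $Y',Y''$ with $|Y'|=|Y''|=\omega_1$. Then $\mathbb X\equiv\mathbb Y$, $\mathbb X\equiv_{\mathcal P_{\infty\omega}}\mathbb Y$, $\mathbb X\not\sim_c\mathbb Y$, and $\mathbb X\not\equiv_{\infty\omega}\mathbb Y$.
   Context: The language has one binary relation symbol $R$. A condensation from $\langle X,\rho\rangle$ onto $\langle Y,\sigma\rangle$ is a bijection $F:X\to Y$ with $x\,\rho\,x'\Rightarrow F(x)\,\sigma\,F(x')$; $\mathbb X\sim_c\mathbb Y$ means condensations exist in both directions. $\equiv$ is first order elementary equivalence, $\equiv_{\infty\omega}$ equivalence for all $L_{\infty\omega}$-sentences. $\mathcal P_0$ consists of all atomic formulas ($v_\alpha=v_\beta$, $R(v_\alpha,v_\beta)$) and all $\neg\,v_\alpha=v_\beta$; $\mathcal P_{\infty\omega}$ is the closure of $\mathcal P_0$ under $\forall v$, $\exists v$ and conjunctions and disjunctions of arbitrary sets of formulas (no negation); $\equiv_{\mathcal P_{\infty\omega}}$ means satisfying the same $\mathcal P_{\infty\omega}$-sentences. *)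

theory Defs
  imports Main "HOL-Library.Countable_Set"
begin

text \<open>A structure in the language with one binary relation symbol R is a pair
  (X, rho) with carrier X :: 'a set and rho :: ('a * 'a) set, rho a relation on X.\<close>

definition has_size_omega1 :: "'a set \<Rightarrow> bool" where
  "has_size_omega1 A \<longleftrightarrow> (card_of A, cardSuc natLeq) \<in> ordIso"

definition condensation ::
  "'a set \<Rightarrow> ('a \<times> 'a) set \<Rightarrow> 'b set \<Rightarrow> ('b \<times> 'b) set \<Rightarrow> ('a \<Rightarrow> 'b) \<Rightarrow> bool" where
  "condensation X rho Y sigma F \<longleftrightarrow>
     bij_betw F X Y \<and>
     (\<forall>x\<in>X. \<forall>x'\<in>X. (x, x') \<in> rho \<longrightarrow> (F x, F x') \<in> sigma)"

definition cond_equiv ::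
  "'a set \<Rightarrow> ('a \<times> 'a) set \<Rightarrow> 'b set \<Rightarrow> ('b \<times> 'b) set \<Rightarrow> bool" where
  "cond_equiv X rho Y sigma \<longleftrightarrow>
     (\<exists>F. condensation X rho Y sigma F) \<and> (\<exists>G. condensation Y sigma X rho G)"

datatype fo =
    FEq nat nat
  | FRel nat nat
  | FNeg fo
  | FAnd fo fo
  | FOr fo fo
  | FEx nat fo
  | FAll nat fo

primrec fo_fv :: "fo \<Rightarrow> nat set" where
  "fo_fv (FEq i j) = {i, j}"
| "fo_fv (FRel i j) = {i, j}"
| "fo_fv (FNeg p) = fo_fv p"
| "fo_fv (FAnd p q) = fo_fv p \<union> fo_fv q"
| "fo_fv (FOr p q) = fo_fv p \<union> fo_fv q"
| "fo_fv (FEx v p) = fo_fv p - {v}"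
| "fo_fv (FAll v p) = fo_fv p - {v}"

primrec fo_sat :: "'a set \<Rightarrow> ('a \<times> 'a) set \<Rightarrow> fo \<Rightarrow> (nat \<Rightarrow> 'a) \<Rightarrow> bool" where
  "fo_sat X rho (FEq i j) s = (s i = s j)"
| "fo_sat X rho (FRel i j) s = ((s i, s j) \<in> rho)"
| "fo_sat X rho (FNeg p) s = (\<not> fo_sat X rho p s)"
| "fo_sat X rho (FAnd p q) s = (fo_sat X rho p s \<and> fo_sat X rho q s)"
| "fo_sat X rho (FOr p q) s = (fo_sat X rho p s \<or> fo_sat X rho q s)"
| "fo_sat X rho (FEx v p) s = (\<exists>a\<in>X. fo_sat X rho p (s(v := a)))"
| "fo_sat X rho (FAll v p) s = (\<forall>a\<in>X. fo_sat X rho p (s(v := a)))"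

definition fo_models :: "'a set \<Rightarrow> ('a \<times> 'a) set \<Rightarrow> fo \<Rightarrow> bool" where
  "fo_models X rho p \<longleftrightarrow> (\<forall>s. range s \<subseteq> X \<longrightarrow> fo_sat X rho p s)"

definition elem_equiv ::
  "'a set \<Rightarrow> ('a \<times> 'a) set \<Rightarrow> 'b set \<Rightarrow> ('b \<times> 'b) set \<Rightarrow> bool" where
  "elem_equiv X rho Y sigma \<longleftrightarrow>
     (\<forall>p. fo_fv p = {} \<longrightarrow> (fo_models X rho p \<longleftrightarrow> fo_models Y sigma p))"

text \<open>Formulas whose conjunctions/disjunctions range over sets of formulas of the form
  f ` S with S :: 'i set. The index type 'i bounds the size of the conjunctions;
  L_{\<infinity>\<omega>} is the union over all index types.\<close>

datatype 'i inf =
    IEq nat nat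
  | IRel nat nat
  | INeg "'i inf"
  | IConj "'i set" "'i \<Rightarrow> 'i inf"
  | IDisj "'i set" "'i \<Rightarrow> 'i inf"
  | IEx nat "'i inf"
  | IAll nat "'i inf"

primrec inf_fv :: "'i inf \<Rightarrow> nat set" where
  "inf_fv (IEq i j) = {i, j}"
| "inf_fv (IRel i j) = {i, j}"
| "inf_fv (INeg p) = inf_fv p"
| "inf_fv (IConj S f) = (\<Union>k\<in>S. inf_fv (f k))"
| "inf_fv (IDisj S f) = (\<Union>k\<in>S. inf_fv (f k))"
| "inf_fv (IEx v p) = inf_fv p - {v}"
| "inf_fv (IAll v p) = inf_fv p - {v}"

primrec inf_sat :: "'a set \<Rightarrow> ('a \<times> 'a) set \<Rightarrow> 'i inf \<Rightarrow> (nat \<Rightarrow> 'a) \<Rightarrow> bool" where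
  "inf_sat X rho (IEq i j) s = (s i = s j)"
| "inf_sat X rho (IRel i j) s = ((s i, s j) \<in> rho)"
| "inf_sat X rho (INeg p) s = (\<not> inf_sat X rho p s)"
| "inf_sat X rho (IConj S f) s = (\<forall>k\<in>S. inf_sat X rho (f k) s)"
| "inf_sat X rho (IDisj S f) s = (\<exists>k\<in>S. inf_sat X rho (f k) s)"
| "inf_sat X rho (IEx v p) s = (\<exists>a\<in>X. inf_sat X rho p (s(v := a)))"
| "inf_sat X rho (IAll v p) s = (\<forall>a\<in>X. inf_sat X rho p (s(v := a)))"

definition inf_models :: "'a set \<Rightarrow> ('a \<times> 'a) set \<Rightarrow> 'i inf \<Rightarrow> bool" where
  "inf_models X rho p \<longleftrightarrow> (\<forall>s. range s \<subseteq> X \<longrightarrow> inf_sat X rho p s)"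

primrec positive :: "'i inf \<Rightarrow> bool" where
  "positive (IEq i j) = True"
| "positive (IRel i j) = True"
| "positive (INeg p) = (case p of IEq i j \<Rightarrow> True | _ \<Rightarrow> False)"
| "positive (IConj S f) = (\<forall>k\<in>S. positive (f k))"
| "positive (IDisj S f) = (\<forall>k\<in>S. positive (f k))"
| "positive (IEx v p) = positive p"
| "positive (IAll v p) = positive p"

definition inf_equiv ::
  "'i itself \<Rightarrow> 'a set \<Rightarrow> ('a \<times> 'a) set \<Rightarrow> 'b set \<Rightarrow> ('b \<times> 'b) set \<Rightarrow> bool" where
  "inf_equiv _ X rho Y sigma \<longleftrightarrow>
     (\<forall>p :: 'i inf. inf_fv p = {} \<longrightarrow> (inf_models X rho p \<longleftrightarrow> inf_models Y sigma p))"

definition pos_equiv ::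
  "'i itself \<Rightarrow> 'a set \<Rightarrow> ('a \<times> 'a) set \<Rightarrow> 'b set \<Rightarrow> ('b \<times> 'b) set \<Rightarrow> bool" where
  "pos_equiv _ X rho Y sigma \<longleftrightarrow>
     (\<forall>p :: 'i inf. inf_fv p = {} \<longrightarrow> positive p \<longrightarrow>
        (inf_models X rho p \<longleftrightarrow> inf_models Y sigma p))"

end

theory Submission
  imports Defs "HOL-Library.Countable_Set_Type"
begin

text \<open>
  Elementary equivalence is an Ehrenfeucht-Fraisse argument: a partial isomorphism on fewer
  than N points that also preserves class sizes truncated at N extends by any further point,
  since a point in a new class can be answered by a singleton, by the unique class of the same
  small size, or by a class of size at least N. Positive sentences transfer in either
  direction along partial maps preserving equality, inequality and the relation, which send
  every non-singleton into one infinite class of the target and answer universal quantifiers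
  by fresh singletons of the source.

  A condensation maps the uncountable class of X into a single class of Y, so the other
  uncountable class of Y lies in the countable image of the rest of X. Finally the
  L_{\<omega>1\<omega>}-sentence "there are two unrelated elements with infinite classes" holds
  in Y but not in X.
\<close>

lemma has_size_omega1_uncountable: "has_size_omega1 A \<Longrightarrow> uncountable A"
  including cardinal_syntax
  unfolding has_size_omega1_def countable_card_le_natLeq
  by (meson cardSuc_greater natLeq_Card_order not_ordLess_ordLeq ordIso_iff_ordLeq
      ordLeq_ordLess_trans)

lemma equiv_class_of_member: "equiv A r \<Longrightarrow> C \<in> A//r \<Longrightarrow> x \<in> C \<Longrightarrow> r``{x} = C"
  by (metis quotientE Image_singleton_iff equiv_class_eq)

lemma infinite_obtain_fresh:
  assumes "infinite A" and "finite B"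
  obtains a where "a \<in> A" and "a \<notin> B"
  using assms by (metis finite_subset subsetI)

definition singletons :: "'a set \<Rightarrow> ('a \<times> 'a) set \<Rightarrow> 'a set" where
  "singletons A r = {a \<in> A. r``{a} = {a}}"

lemma infinite_singletons:
  assumes eq: "equiv A r" and inf: "infinite {C \<in> A//r. card C = 1}"
  shows "infinite (singletons A r)"
proof
  assume "finite (singletons A r)"
  moreover have "{C \<in> A//r. card C = 1} \<subseteq> (\<lambda>a. {a}) ` singletons A r"
  proof
    fix C assume C: "C \<in> {C \<in> A//r. card C = 1}"
    then obtain a where a: "C = {a}" using card_1_singletonE by blast
    then have "a \<in> A" using C in_quotient_imp_subset[OF eq] by blast
    moreover have "r``{a} = {a}" using equiv_class_of_member[OF eq, of C a] C a by simp
    ultimately show "C \<in> (\<lambda>a. {a}) ` singletons A r" unfolding singletons_def using a by blast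
  qed
  ultimately show False using inf finite_surj by blast
qed

definition coherent ::
  "('a \<Rightarrow> 'a \<Rightarrow> 'b \<Rightarrow> 'b \<Rightarrow> bool) \<Rightarrow> nat set \<Rightarrow> (nat \<Rightarrow> 'a) \<Rightarrow> (nat \<Rightarrow> 'b) \<Rightarrow> bool" where
  "coherent R V s t \<longleftrightarrow> (\<forall>i\<in>V. \<forall>j\<in>V. R (s i) (s j) (t i) (t j))"

lemma coherent_empty [simp]: "coherent R {} s t"
  unfolding coherent_def by simp

lemma coherent_subset: "coherent R V s t \<Longrightarrow> W \<subseteq> V \<Longrightarrow> coherent R W s t"
  unfolding coherent_def by blast

lemma coherent_insert:
  assumes "coherent R W s t" and "v \<notin> W" and "R a a b b"
    and "\<And>j. j \<in> W \<Longrightarrow> R a (s j) b (t j) \<and> R (s j) a (t j) b"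
  shows "coherent R (insert v W) (s(v := a)) (t(v := b))"
  using assms unfolding coherent_def by (metis fun_upd_apply insert_iff)

lemma coherent_insert_old:
  assumes "coherent R W s t" and "v \<notin> W" and "i \<in> W"
  shows "coherent R (insert v W) (s(v := s i)) (t(v := t i))"
  by (rule coherent_insert) (use assms in \<open>auto simp: coherent_def\<close>)

section \<open>Positive sentences\<close>

definition pos_match ::
  "('a \<times> 'a) set \<Rightarrow> ('b \<times> 'b) set \<Rightarrow> 'a set \<Rightarrow> 'b set \<Rightarrow> 'a \<Rightarrow> 'a \<Rightarrow> 'b \<Rightarrow> 'b \<Rightarrow> bool" where
  "pos_match rho sigma S Y' x x' y y' \<longleftrightarrow>
     (x = x' \<longleftrightarrow> y = y') \<and> ((x, x') \<in> rho \<longrightarrow> (y, y') \<in> sigma) \<and> (x \<notin> S \<longrightarrow> y \<in> Y')"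

lemma pos_match_forth:
  assumes eX: "equiv X rho" and eY: "equiv Y sigma" and Y': "Y' \<in> Y//sigma" "infinite Y'"
    and W: "finite W" "v \<notin> W" and t: "range t \<subseteq> Y"
    and coh: "coherent (pos_match rho sigma (singletons X rho) Y') W s t"
  shows "\<exists>b\<in>Y. coherent (pos_match rho sigma (singletons X rho) Y')
    (insert v W) (s(v := a)) (t(v := b))"
proof (cases "\<exists>i\<in>W. s i = a")
  case True
  then obtain i where "i \<in> W" "a = s i" by blast
  then show ?thesis using coherent_insert_old[OF coh W(2)] t by blast
next
  case False
  obtain b where b: "b \<in> Y'" "b \<notin> t ` W" using infinite_obtain_fresh Y'(2) W(1) by blast
  have Y'_rel: "(y, y') \<in> sigma" if "y \<in> Y'" "y' \<in> Y'" for y y'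
    using equiv_class_of_member[OF eY Y'(1) that(1)] that(2) by blast
  have sym_rho: "sym rho" using eX by (rule equivE)
  have into_Y': "t j \<in> Y'" if "(a, s j) \<in> rho \<or> (s j, a) \<in> rho" "j \<in> W" for j
  proof -
    have "(s j, a) \<in> rho" using that(1) sym_rho by (auto dest: symD)
    then have "a \<in> rho``{s j}" by blast
    then have "s j \<notin> singletons X rho"
      using False that(2) unfolding singletons_def by (metis (mono_tags) mem_Collect_eq singletonD)
    then show ?thesis using coh that(2) unfolding coherent_def pos_match_def by blast
  qed
  have "coherent (pos_match rho sigma (singletons X rho) Y') (insert v W) (s(v := a)) (t(v := b))"
  proof (rule coherent_insert[OF coh W(2)])
    show "pos_match rho sigma (singletons X rho) Y' a a b b"
      using b(1) Y'_rel unfolding pos_match_def by blast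
    fix j assume j: "j \<in> W"
    have "a \<noteq> s j" "b \<noteq> t j" using False b(2) j by auto
    moreover have "s j \<notin> singletons X rho \<longrightarrow> t j \<in> Y'"
      using coh j unfolding coherent_def pos_match_def by blast
    ultimately show "pos_match rho sigma (singletons X rho) Y' a (s j) b (t j) \<and>
        pos_match rho sigma (singletons X rho) Y' (s j) a (t j) b"
      using into_Y'[OF _ j] b(1) Y'_rel unfolding pos_match_def by metis
  qed
  then show ?thesis using b in_quotient_imp_subset[OF eY Y'(1)] by blast
qed

lemma pos_match_back:
  assumes eX: "equiv X rho" and eY: "equiv Y sigma" and S: "infinite (singletons X rho)"
    and W: "finite W" "v \<notin> W" and s: "range s \<subseteq> X" and b: "b \<in> Y"
    and coh: "coherent (pos_match rho sigma (singletons X rho) Y') W s t"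
  shows "\<exists>a\<in>X. coherent (pos_match rho sigma (singletons X rho) Y')
    (insert v W) (s(v := a)) (t(v := b))"
proof (cases "\<exists>i\<in>W. t i = b")
  case True
  then obtain i where "i \<in> W" "b = t i" by blast
  then show ?thesis using coherent_insert_old[OF coh W(2)] s by blast
next
  case False
  obtain a where a: "a \<in> singletons X rho" "a \<notin> s ` W" using infinite_obtain_fresh S W(1) by blast
  have sym_rho: "sym rho" using eX by (rule equivE)
  have a_class: "(a, x) \<notin> rho" "(x, a) \<notin> rho" if "x \<noteq> a" for x
    using a(1) that sym_rho unfolding singletons_def by (auto dest: symD)
  have "coherent (pos_match rho sigma (singletons X rho) Y') (insert v W) (s(v := a)) (t(v := b))"
  proof (rule coherent_insert[OF coh W(2)])
    show "pos_match rho sigma (singletons X rho) Y' a a b b"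
      using a(1) b eY unfolding pos_match_def equiv_def refl_on_def by blast
    fix j assume j: "j \<in> W"
    have "a \<noteq> s j" "b \<noteq> t j" using False a(2) j by auto
    moreover have "s j \<notin> singletons X rho \<longrightarrow> t j \<in> Y'"
      using coh j unfolding coherent_def pos_match_def by blast
    ultimately show "pos_match rho sigma (singletons X rho) Y' a (s j) b (t j) \<and>
        pos_match rho sigma (singletons X rho) Y' (s j) a (t j) b"
      using a(1) a_class[of "s j"] unfolding pos_match_def by metis
  qed
  then show ?thesis using a unfolding singletons_def by blast
qed

lemma inf_sat_positive_transfer:
  fixes p :: "'i inf"
  assumes eX: "equiv X rho" and eY: "equiv Y sigma" and S: "infinite (singletons X rho)"
    and Y': "Y' \<in> Y//sigma" "infinite Y'"
  shows "positive p \<Longrightarrow> finite V \<Longrightarrow> inf_fv p \<subseteq> V \<Longrightarrow> range s \<subseteq> X \<Longrightarrow> range t \<subseteq> Y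
    \<Longrightarrow> coherent (pos_match rho sigma (singletons X rho) Y') V s t
    \<Longrightarrow> inf_sat X rho p s \<Longrightarrow> inf_sat Y sigma p t"
proof (induction p arbitrary: V s t)
  case (IConj K f)
  have "inf_sat Y sigma (f k) t" if "k \<in> K" for k
    by (rule IConj.IH[OF rangeI _ IConj.prems(2) _ IConj.prems(4-6)]) (use IConj.prems that in auto)
  then show ?case by simp
next
  case (IDisj K f)
  then obtain k where k: "k \<in> K" "inf_sat X rho (f k) s" by auto
  have "inf_sat Y sigma (f k) t"
    by (rule IDisj.IH[OF rangeI _ IDisj.prems(2) _ IDisj.prems(4-6) k(2)]) (use IDisj.prems k in auto)
  then show ?case using k(1) by auto
next
  case (IEq i j)
  then show ?case by (auto simp: coherent_def pos_match_def)
next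
  case (IRel i j)
  then show ?case by (auto simp: coherent_def pos_match_def)
next
  case (INeg p)
  then obtain i j where "p = IEq i j" by (cases p) auto
  with INeg show ?case by (auto simp: coherent_def pos_match_def)
next
  case (IEx v p)
  let ?W = "V - {v}"
  from IEx.prems obtain a where a: "a \<in> X" "inf_sat X rho p (s(v := a))" by auto
  obtain b where b: "b \<in> Y"
    and coh: "coherent (pos_match rho sigma (singletons X rho) Y') (insert v ?W) (s(v := a)) (t(v := b))"
    using pos_match_forth[OF eX eY Y', of ?W v t s a] coherent_subset[OF IEx.prems(6)] IEx.prems
    by blast
  have "inf_sat Y sigma p (t(v := b))"
    by (rule IEx.IH[OF _ _ _ _ _ coh a(2)]) (use IEx.prems a b in auto)
  then show ?case using b by auto
next
  case (IAll v p)
  let ?W = "V - {v}"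
  have "inf_sat Y sigma p (t(v := b))" if b: "b \<in> Y" for b
  proof -
    obtain a where a: "a \<in> X"
      and coh: "coherent (pos_match rho sigma (singletons X rho) Y') (insert v ?W) (s(v := a)) (t(v := b))"
      using pos_match_back[OF eX eY S, of ?W v s b Y' t] coherent_subset[OF IAll.prems(6)] IAll.prems b
      by blast
    have sat: "inf_sat X rho p (s(v := a))" using IAll.prems(7) a by simp
    show ?thesis
      by (rule IAll.IH[OF _ _ _ _ _ coh sat]) (use IAll.prems a b in auto)
  qed
  then show ?case by simp
qed

lemma inf_models_positive_transfer:
  fixes p :: "'i inf"
  assumes eX: "equiv X rho" and eY: "equiv Y sigma" and S: "infinite (singletons X rho)"
    and Y': "Y' \<in> Y//sigma" "infinite Y'" and "X \<noteq> {}"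
    and p: "positive p" "inf_fv p = {}" and X_models: "inf_models X rho p"
  shows "inf_models Y sigma p"
  unfolding inf_models_def
proof (intro allI impI)
  fix t :: "nat \<Rightarrow> 'b" assume t: "range t \<subseteq> Y"
  obtain x0 where "x0 \<in> X" using \<open>X \<noteq> {}\<close> by blast
  then have s: "range (\<lambda>_::nat. x0) \<subseteq> X" by auto
  then have "inf_sat X rho p (\<lambda>_. x0)" using X_models unfolding inf_models_def by blast
  then show "inf_sat Y sigma p t"
    using inf_sat_positive_transfer[OF eX eY S Y' p(1) finite.emptyI _ s t coherent_empty] p(2) by simp
qed

lemma pos_equiv_if_singletons_and_infinite_class:
  assumes eX: "equiv X rho" and eY: "equiv Y sigma"
    and "infinite (singletons X rho)" "infinite (singletons Y sigma)"
    and "X' \<in> X//rho" "infinite X'" "Y' \<in> Y//sigma" "infinite Y'"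
  shows "pos_equiv TYPE('i) X rho Y sigma"
proof -
  have "X \<noteq> {}" "Y \<noteq> {}" using assms(5,7) by auto
  then show ?thesis
    unfolding pos_equiv_def
    using inf_models_positive_transfer[OF eX eY] inf_models_positive_transfer[OF eY eX] assms
    by blast
qed

section \<open>Elementary equivalence\<close>

definition standard_finite_classes :: "'a set \<Rightarrow> ('a \<times> 'a) set \<Rightarrow> bool" where
  "standard_finite_classes A r \<longleftrightarrow> equiv A r \<and> infinite (singletons A r)
     \<and> (\<forall>m\<ge>2. \<exists>!C. C \<in> A//r \<and> finite C \<and> card C = m)"

lemma ex1_unique: "\<exists>!x. P x \<Longrightarrow> P a \<Longrightarrow> P b \<Longrightarrow> a = b"
  by blast

lemma standard_finite_classes_exists:
  assumes "standard_finite_classes A r" and "2 \<le> m"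
  obtains C where "C \<in> A//r" and "finite C" and "card C = m"
  using assms unfolding standard_finite_classes_def by (metis ex1_implies_ex)

lemma standard_finite_classes_unique:
  assumes "standard_finite_classes A r" and "2 \<le> m"
    and "C \<in> A//r" "finite C" "card C = m" and "C' \<in> A//r" "finite C'" "card C' = m"
  shows "C = C'"
proof -
  have uniq: "\<exists>!C. C \<in> A//r \<and> finite C \<and> card C = m"
    using assms(1,2) unfolding standard_finite_classes_def by simp
  show ?thesis by (rule ex1_unique[OF uniq]) (use assms(3-8) in auto)
qed

definition class_size_upto :: "('a \<times> 'a) set \<Rightarrow> nat \<Rightarrow> 'a \<Rightarrow> nat" where
  "class_size_upto r N x = (if finite (r``{x}) then min (card (r``{x})) N else N)"

lemma class_size_upto_cong: "equiv A r \<Longrightarrow> (x, y) \<in> r \<Longrightarrow> class_size_upto r N x = class_size_upto r N y"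
  unfolding class_size_upto_def using equiv_class_eq by metis

lemma class_size_upto_less:
  "class_size_upto r N x < N \<Longrightarrow> finite (r``{x}) \<and> card (r``{x}) = class_size_upto r N x"
  unfolding class_size_upto_def by (auto split: if_splits)

lemma exists_class_size_upto_top:
  assumes std: "standard_finite_classes A r" and T: "finite T"
  shows "\<exists>b\<in>A. class_size_upto r N b = N \<and> (\<forall>u\<in>T. (b, u) \<notin> r)"
proof -
  have eq: "equiv A r" using std unfolding standard_finite_classes_def by blast
  let ?Big = "{C \<in> A//r. finite C \<and> N \<le> card C}"
  have "{max N 2..} \<subseteq> card ` ?Big"
  proof
    fix m assume "m \<in> {max N 2..}"
    then have m: "m \<ge> 2" "m \<ge> N" by auto
    then obtain C where "C \<in> A//r" "finite C" "card C = m"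
      using standard_finite_classes_exists[OF std] by blast
    then show "m \<in> card ` ?Big" using m by (intro image_eqI[where x = C]) auto
  qed
  then have "infinite (card ` ?Big)" using infinite_Ici by (rule infinite_super)
  then have "infinite ?Big" using finite_imageI by blast
  then obtain C where C: "C \<in> ?Big" "C \<notin> (\<lambda>u. r``{u}) ` T"
    by (rule infinite_obtain_fresh[OF _ finite_imageI[OF T]])
  then obtain b where b: "b \<in> A" "C = r``{b}" by (blast elim: quotientE)
  have "(b, u) \<notin> r" if "u \<in> T" for u
    using C(2) b(2) that equiv_class_eq[OF eq] by (metis image_eqI)
  moreover have "class_size_upto r N b = N" using C(1) b(2) unfolding class_size_upto_def by simp
  ultimately show ?thesis using b(1) by blast
qed

lemma related_if_same_small_size:
  assumes std: "standard_finite_classes A r" and "x \<in> A" "x' \<in> A"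
    and "class_size_upto r N x = m" "class_size_upto r N x' = m" "2 \<le> m" "m < N"
  shows "(x, x') \<in> r"
proof -
  have eq: "equiv A r" using std unfolding standard_finite_classes_def by blast
  have "r``{x} \<in> A//r" "finite (r``{x})" "card (r``{x}) = m"
    "r``{x'} \<in> A//r" "finite (r``{x'})" "card (r``{x'}) = m"
    using assms class_size_upto_less[of r N] by (auto intro: quotientI)
  then have "r``{x} = r``{x'}" using standard_finite_classes_unique[OF std \<open>2 \<le> m\<close>] by blast
  then show ?thesis using eq_equiv_class_iff[OF eq assms(2,3)] by blast
qed

lemma equiv_related_iff:
  assumes "equiv A r" and "(x, y) \<in> r"
  shows "(x, z) \<in> r \<longleftrightarrow> (y, z) \<in> r" and "(z, x) \<in> r \<longleftrightarrow> (z, y) \<in> r"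
  using assms unfolding equiv_def sym_def trans_def by blast+

lemma card_image_eq_if_same_equalities:
  assumes "\<forall>i\<in>U. \<forall>j\<in>U. s i = s j \<longleftrightarrow> t i = t j"
  shows "card (s ` U) = card (t ` U)"
proof -
  let ?P = "(\<lambda>j. (s j, t j)) ` U"
  have "inj_on fst ?P" "inj_on snd ?P" using assms by (auto simp: inj_on_def)
  moreover have "fst ` ?P = s ` U" "snd ` ?P = t ` U" by (auto simp: image_image)
  ultimately show ?thesis by (metis card_image)
qed

definition iso_match ::
  "('a \<times> 'a) set \<Rightarrow> ('b \<times> 'b) set \<Rightarrow> nat \<Rightarrow> 'a \<Rightarrow> 'a \<Rightarrow> 'b \<Rightarrow> 'b \<Rightarrow> bool" where
  "iso_match rho sigma N x x' y y' \<longleftrightarrow>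
     (x = x' \<longleftrightarrow> y = y') \<and> ((x, x') \<in> rho \<longleftrightarrow> (y, y') \<in> sigma)
     \<and> class_size_upto rho N x = class_size_upto sigma N y"

lemma coherent_iso_match_swap:
  "coherent (iso_match rho sigma N) V s t \<Longrightarrow> coherent (iso_match sigma rho N) V t s"
  unfolding coherent_def iso_match_def by metis

lemma exists_fresh_in_class:
  assumes coh: "coherent (iso_match rho sigma N) W s t" and W: "finite W" "card W < N"
    and i: "i \<in> W" and a: "a \<in> rho``{s i}" "a \<notin> s ` W"
  shows "\<exists>b \<in> sigma``{t i}. b \<notin> t ` W"
proof -
  let ?U = "{j \<in> W. (s i, s j) \<in> rho}"
  have match: "iso_match rho sigma N (s j) (s k) (t j) (t k)" if "j \<in> W" "k \<in> W" for j k
    using coh that unfolding coherent_def by blast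
  have t_in_class: "t ` W \<inter> sigma``{t i} = t ` ?U"
    using match[OF i] unfolding iso_match_def by auto
  have card_U: "card (s ` ?U) = card (t ` ?U)"
    by (rule card_image_eq_if_same_equalities) (use match in \<open>auto simp: iso_match_def\<close>)
  have fin_U: "finite (t ` ?U)" using W(1) by simp
  have size: "class_size_upto rho N (s i) = class_size_upto sigma N (t i)"
    using match[OF i i] unfolding iso_match_def by blast
  have "\<not> sigma``{t i} \<subseteq> t ` ?U"
  proof
    assume sub: "sigma``{t i} \<subseteq> t ` ?U"
    then have fin: "finite (sigma``{t i})" using fin_U finite_subset by blast
    have le: "card (sigma``{t i}) \<le> card (t ` ?U)" using card_mono[OF fin_U sub] .
    show False
    proof (cases "class_size_upto sigma N (t i) < N")
      case True
      then have "card (sigma``{t i}) = card (rho``{s i})" "finite (rho``{s i})"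
        using class_size_upto_less size by metis+
      moreover have "s ` ?U \<subset> rho``{s i}" using a by blast
      ultimately have "card (s ` ?U) < card (sigma``{t i})" using psubset_card_mono by metis
      then show False using le card_U by linarith
    next
      case False
      then have "N \<le> card (sigma``{t i})" using fin unfolding class_size_upto_def by auto
      moreover have "card (t ` ?U) \<le> card W"
        using card_image_le[of ?U t] card_mono[OF W(1), of ?U] W(1) by auto
      ultimately show False using le W(2) by linarith
    qed
  qed
  then show ?thesis using t_in_class by blast
qed

lemma exists_unrelated_same_size:
  assumes stdX: "standard_finite_classes X rho" and stdY: "standard_finite_classes Y sigma"
    and coh: "coherent (iso_match rho sigma N) W s t" and W: "finite W" "card W < N"
    and s: "range s \<subseteq> X" and a: "a \<in> X" and new: "\<forall>j\<in>W. (a, s j) \<notin> rho"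
  shows "\<exists>b\<in>Y. (\<forall>j\<in>W. (b, t j) \<notin> sigma) \<and> class_size_upto sigma N b = class_size_upto rho N a"
proof -
  let ?k = "class_size_upto rho N a"
  have eX: "equiv X rho" and eY: "equiv Y sigma"
    using stdX stdY unfolding standard_finite_classes_def by blast+
  have "a \<in> rho``{a}" using equiv_class_self[OF eX a] .
  then have "?k \<noteq> 0" using W(2) unfolding class_size_upto_def by (auto simp: card_gt_0_iff)
  moreover have "?k \<le> N" unfolding class_size_upto_def by simp
  ultimately consider "?k = N" | "?k = 1" | "2 \<le> ?k" "?k < N" by linarith
  then show ?thesis
  proof cases
    case 1
    then show ?thesis using exists_class_size_upto_top[OF stdY finite_imageI[OF W(1), of t], of N] by auto
  next
    case 2
    have "infinite (singletons Y sigma)" using stdY unfolding standard_finite_classes_def by blast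
    then obtain b where b: "b \<in> singletons Y sigma" "b \<notin> t ` W"
      by (rule infinite_obtain_fresh[OF _ finite_imageI[OF W(1)]])
    then have b_class: "sigma``{b} = {b}" and "b \<in> Y" unfolding singletons_def by auto
    moreover have "class_size_upto sigma N b = 1" using b_class W(2)
      unfolding class_size_upto_def by simp
    moreover have "(b, t j) \<notin> sigma" if "j \<in> W" for j
      using b_class b(2) that by (metis Image_singleton_iff image_eqI singletonD)
    ultimately show ?thesis using 2 by metis
  next
    case 3
    obtain D where D: "D \<in> Y//sigma" "finite D" "card D = ?k"
      using standard_finite_classes_exists[OF stdY 3(1)] by metis
    then obtain b where b: "b \<in> Y" "D = sigma``{b}" by (elim quotientE)
    have size_b: "class_size_upto sigma N b = ?k" using D b(2) 3(2) unfolding class_size_upto_def by simp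
    have "(b, t j) \<notin> sigma" if j: "j \<in> W" for j
    proof
      assume "(b, t j) \<in> sigma"
      then have "class_size_upto sigma N (t j) = ?k" using class_size_upto_cong[OF eY] size_b by metis
      moreover have "class_size_upto rho N (s j) = class_size_upto sigma N (t j)"
        using coh j unfolding coherent_def iso_match_def by blast
      ultimately have "(a, s j) \<in> rho"
        using related_if_same_small_size[OF stdX a _ refl _ 3] s by auto
      then show False using new j by blast
    qed
    then show ?thesis using b(1) size_b by blast
  qed
qed

lemma iso_match_forth:
  assumes stdX: "standard_finite_classes X rho" and stdY: "standard_finite_classes Y sigma"
    and coh: "coherent (iso_match rho sigma N) W s t" and W: "finite W" "card W < N" "v \<notin> W"
    and s: "range s \<subseteq> X" and t: "range t \<subseteq> Y" and a: "a \<in> X"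
  shows "\<exists>b\<in>Y. coherent (iso_match rho sigma N) (insert v W) (s(v := a)) (t(v := b))"
proof -
  have eX: "equiv X rho" and eY: "equiv Y sigma"
    using stdX stdY unfolding standard_finite_classes_def by blast+
  have match: "iso_match rho sigma N (s j) (s k) (t j) (t k)" if "j \<in> W" "k \<in> W" for j k
    using coh that unfolding coherent_def by blast
  have refl_a: "(a, a) \<in> rho" using a eX unfolding equiv_def refl_on_def by blast
  have refl_Y: "(b, b) \<in> sigma" if "b \<in> Y" for b using that eY unfolding equiv_def refl_on_def by blast
  consider (old) i where "i \<in> W" "a = s i"
    | (same_class) i where "i \<in> W" "(s i, a) \<in> rho" "a \<notin> s ` W"
    | (new_class) "\<forall>j\<in>W. (a, s j) \<notin> rho" "a \<notin> s ` W"
    using eX unfolding equiv_def sym_def by blast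
  then show ?thesis
  proof cases
    case old
    then show ?thesis using coherent_insert_old[OF coh W(3)] t by blast
  next
    case same_class
    obtain b where b: "b \<in> sigma``{t i}" "b \<notin> t ` W"
      using exists_fresh_in_class[OF coh W(1,2) same_class(1)] same_class(2,3) by blast
    have tb: "(t i, b) \<in> sigma" and bY: "b \<in> Y" using b(1) eY unfolding equiv_def by auto
    have ai: "(a, s i) \<in> rho" using same_class(2) eX unfolding equiv_def sym_def by blast
    have "class_size_upto rho N a = class_size_upto rho N (s i)" using class_size_upto_cong[OF eX ai] .
    also have "\<dots> = class_size_upto sigma N (t i)" using match[OF same_class(1,1)] unfolding iso_match_def by blast
    also have "\<dots> = class_size_upto sigma N b" using class_size_upto_cong[OF eY tb] .
    finally have size: "class_size_upto rho N a = class_size_upto sigma N b" .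
    have "coherent (iso_match rho sigma N) (insert v W) (s(v := a)) (t(v := b))"
    proof (rule coherent_insert[OF coh W(3)])
      show "iso_match rho sigma N a a b b" using size refl_a refl_Y[OF bY] unfolding iso_match_def by blast
      fix j assume j: "j \<in> W"
      have "a \<noteq> s j" "b \<noteq> t j" using same_class(3) b(2) j by auto
      moreover have "(s i, s j) \<in> rho \<longleftrightarrow> (t i, t j) \<in> sigma" "(s j, s i) \<in> rho \<longleftrightarrow> (t j, t i) \<in> sigma"
        using match[OF same_class(1) j] match[OF j same_class(1)] unfolding iso_match_def by blast+
      ultimately show "iso_match rho sigma N a (s j) b (t j) \<and> iso_match rho sigma N (s j) a (t j) b"
        using size match[OF j j] equiv_related_iff[OF eX ai] equiv_related_iff[OF eY tb]
        unfolding iso_match_def by auto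
    qed
    then show ?thesis using bY by blast
  next
    case new_class
    obtain b where bY: "b \<in> Y" and b: "\<forall>j\<in>W. (b, t j) \<notin> sigma"
      and size: "class_size_upto sigma N b = class_size_upto rho N a"
      using exists_unrelated_same_size[OF stdX stdY coh W(1,2) s a new_class(1)] by blast
    have "coherent (iso_match rho sigma N) (insert v W) (s(v := a)) (t(v := b))"
    proof (rule coherent_insert[OF coh W(3)])
      show "iso_match rho sigma N a a b b" using size refl_a refl_Y[OF bY] unfolding iso_match_def by simp
      fix j assume j: "j \<in> W"
      have "(s j, a) \<notin> rho" "(t j, b) \<notin> sigma"
        using new_class(1) b j eX eY unfolding equiv_def sym_def by blast+
      moreover have "a \<noteq> s j" "b \<noteq> t j" using new_class(1) b j refl_a refl_Y[OF bY] by auto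
      ultimately show "iso_match rho sigma N a (s j) b (t j) \<and> iso_match rho sigma N (s j) a (t j) b"
        using new_class(1) b j size match[OF j j] unfolding iso_match_def by auto
    qed
    then show ?thesis using bY by blast
  qed
qed

lemma coherent_quantifier_transfer:
  assumes stdX: "standard_finite_classes X rho" and stdY: "standard_finite_classes Y sigma"
    and coh: "coherent (iso_match rho sigma N) W s t" and W: "finite W" "card W < N" "v \<notin> W"
    and s: "range s \<subseteq> X" and t: "range t \<subseteq> Y"
    and step: "\<And>a b. a \<in> X \<Longrightarrow> b \<in> Y
      \<Longrightarrow> coherent (iso_match rho sigma N) (insert v W) (s(v := a)) (t(v := b)) \<Longrightarrow> P a \<longleftrightarrow> Q b"
  shows "(\<exists>a\<in>X. P a) \<longleftrightarrow> (\<exists>b\<in>Y. Q b)" and "(\<forall>a\<in>X. P a) \<longleftrightarrow> (\<forall>b\<in>Y. Q b)"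
proof -
  have forth: "\<exists>b\<in>Y. P a \<longleftrightarrow> Q b" if "a \<in> X" for a
    using iso_match_forth[OF stdX stdY coh W s t that] step that by blast
  have backward: "\<exists>a\<in>X. P a \<longleftrightarrow> Q b" if "b \<in> Y" for b
    using iso_match_forth[OF stdY stdX coherent_iso_match_swap[OF coh] W t s that] step that
      coherent_iso_match_swap by blast
  show "(\<exists>a\<in>X. P a) \<longleftrightarrow> (\<exists>b\<in>Y. Q b)" "(\<forall>a\<in>X. P a) \<longleftrightarrow> (\<forall>b\<in>Y. Q b)"
    using forth backward by blast+
qed

primrec quantifier_rank :: "fo \<Rightarrow> nat" where
  "quantifier_rank (FEq i j) = 0"
| "quantifier_rank (FRel i j) = 0"
| "quantifier_rank (FNeg p) = quantifier_rank p"
| "quantifier_rank (FAnd p q) = max (quantifier_rank p) (quantifier_rank q)"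
| "quantifier_rank (FOr p q) = max (quantifier_rank p) (quantifier_rank q)"
| "quantifier_rank (FEx v p) = Suc (quantifier_rank p)"
| "quantifier_rank (FAll v p) = Suc (quantifier_rank p)"

lemma fo_sat_transfer:
  assumes stdX: "standard_finite_classes X rho" and stdY: "standard_finite_classes Y sigma"
  shows "finite V \<Longrightarrow> fo_fv p \<subseteq> V \<Longrightarrow> range s \<subseteq> X \<Longrightarrow> range t \<subseteq> Y
    \<Longrightarrow> coherent (iso_match rho sigma N) V s t \<Longrightarrow> quantifier_rank p + card V \<le> N
    \<Longrightarrow> fo_sat X rho p s \<longleftrightarrow> fo_sat Y sigma p t"
proof (induction p arbitrary: V s t)
  case (FEx v p)
  let ?W = "V - {v}"
  have W: "finite ?W" "card ?W < N" "v \<notin> ?W"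
    using FEx.prems card_Diff1_le[of V v] by auto
  have "fo_sat X rho p (s(v := a)) \<longleftrightarrow> fo_sat Y sigma p (t(v := b))"
    if "a \<in> X" "b \<in> Y" "coherent (iso_match rho sigma N) (insert v ?W) (s(v := a)) (t(v := b))" for a b
    by (rule FEx.IH[OF _ _ _ _ that(3)]) (use FEx.prems W that in \<open>auto simp: card_insert_if\<close>)
  then show ?case
    using coherent_quantifier_transfer(1)[OF stdX stdY coherent_subset[OF FEx.prems(5)] W] FEx.prems
    by simp
next
  case (FAll v p)
  let ?W = "V - {v}"
  have W: "finite ?W" "card ?W < N" "v \<notin> ?W"
    using FAll.prems card_Diff1_le[of V v] by auto
  have "fo_sat X rho p (s(v := a)) \<longleftrightarrow> fo_sat Y sigma p (t(v := b))"
    if "a \<in> X" "b \<in> Y" "coherent (iso_match rho sigma N) (insert v ?W) (s(v := a)) (t(v := b))" for a b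
    by (rule FAll.IH[OF _ _ _ _ that(3)]) (use FAll.prems W that in \<open>auto simp: card_insert_if\<close>)
  then show ?case
    using coherent_quantifier_transfer(2)[OF stdX stdY coherent_subset[OF FAll.prems(5)] W] FAll.prems
    by simp
qed (auto simp: coherent_def iso_match_def)

lemma standard_finite_classes_elem_equiv:
  assumes stdX: "standard_finite_classes X rho" and stdY: "standard_finite_classes Y sigma"
    and "X \<noteq> {}" "Y \<noteq> {}"
  shows "elem_equiv X rho Y sigma"
proof -
  have same: "fo_sat X rho p s \<longleftrightarrow> fo_sat Y sigma p t"
    if "fo_fv p = {}" "range s \<subseteq> X" "range t \<subseteq> Y" for p s t
    by (rule fo_sat_transfer[OF stdX stdY, of "{}" p s t "quantifier_rank p"]) (use that in auto)
  obtain x0 y0 where "x0 \<in> X" "y0 \<in> Y" using assms(3,4) by blast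
  then have x0: "range (\<lambda>_. x0) \<subseteq> X" and y0: "range (\<lambda>_. y0) \<subseteq> Y" by auto
  show ?thesis
    unfolding elem_equiv_def fo_models_def
  proof (intro allI impI iffI)
    fix p and t :: "nat \<Rightarrow> 'b"
    assume p: "fo_fv p = {}" and X_sat: "\<forall>s. range s \<subseteq> X \<longrightarrow> fo_sat X rho p s" and t: "range t \<subseteq> Y"
    show "fo_sat Y sigma p t" using X_sat[rule_format, OF x0] same[OF p x0 t] by simp
  next
    fix p and s :: "nat \<Rightarrow> 'a"
    assume p: "fo_fv p = {}" and Y_sat: "\<forall>t. range t \<subseteq> Y \<longrightarrow> fo_sat Y sigma p t" and s: "range s \<subseteq> X"
    show "fo_sat X rho p s" using Y_sat[rule_format, OF y0] same[OF p s y0] by simp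
  qed
qed

section \<open>Counting class sizes in L_{\<infinity>\<omega>}\<close>

definition inf_and :: "nat inf \<Rightarrow> nat inf \<Rightarrow> nat inf" where
  "inf_and p q = IConj {0, 1} (\<lambda>i. if i = 0 then p else q)"

lemma inf_sat_inf_and [simp]:
  "inf_sat X rho (inf_and p q) s \<longleftrightarrow> inf_sat X rho p s \<and> inf_sat X rho q s"
  unfolding inf_and_def by simp

lemma inf_fv_inf_and [simp]: "inf_fv (inf_and p q) = inf_fv p \<union> inf_fv q"
  unfolding inf_and_def by simp

text \<open>The class of v_x has at least m elements different from v_2, ..., v_(k+1);
  the witnesses are bound to v_(k+2), v_(k+3), ...\<close>

primrec at_least_in_class :: "nat \<Rightarrow> nat \<Rightarrow> nat \<Rightarrow> nat inf" where
  "at_least_in_class x 0 k = IConj {} (\<lambda>_. IEq 0 0)"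
| "at_least_in_class x (Suc m) k = IEx (k + 2) (inf_and (IRel x (k + 2))
     (inf_and (IConj {2..<k + 2} (\<lambda>j. INeg (IEq j (k + 2)))) (at_least_in_class x m (Suc k))))"

lemma inf_fv_at_least_in_class: "inf_fv (at_least_in_class x m k) \<subseteq> insert x {2..<k + 2}"
proof (induction m arbitrary: k)
  case (Suc m)
  have "inf_fv (at_least_in_class x m (Suc k)) - {k + 2} \<subseteq> insert x {2..<k + 2}"
    using Suc.IH[of "Suc k"] by auto
  then show ?case by auto
qed simp

lemma ex_subset_card_Suc:
  "(\<exists>a\<in>B. \<exists>F. F \<subseteq> B - {a} \<and> finite F \<and> card F = m) \<longleftrightarrow> (\<exists>F. F \<subseteq> B \<and> finite F \<and> card F = Suc m)"
proof
  assume "\<exists>a\<in>B. \<exists>F. F \<subseteq> B - {a} \<and> finite F \<and> card F = m"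
  then obtain a F where "a \<in> B" "F \<subseteq> B - {a}" "finite F" "card F = m" by blast
  then show "\<exists>F. F \<subseteq> B \<and> finite F \<and> card F = Suc m"
    by (intro exI[of _ "insert a F"]) (auto simp: card_insert_if)
next
  assume "\<exists>F. F \<subseteq> B \<and> finite F \<and> card F = Suc m"
  then obtain F where F: "F \<subseteq> B" "finite F" "card F = Suc m" by blast
  then obtain a where "a \<in> F" by (metis card_eq_SucD insertI1)
  then show "\<exists>a\<in>B. \<exists>F. F \<subseteq> B - {a} \<and> finite F \<and> card F = m"
    using F by (intro bexI[of _ a] exI[of _ "F - {a}"]) auto
qed

lemma at_least_in_class_sat:
  assumes eq: "equiv X rho" and x: "x < 2"
  shows "range s \<subseteq> X \<Longrightarrow> inf_sat X rho (at_least_in_class x m k) s \<longleftrightarrow>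
    (\<exists>F. F \<subseteq> rho``{s x} - s ` {2..<k + 2} \<and> finite F \<and> card F = m)"
proof (induction m arbitrary: k s)
  case 0
  show ?case by (auto intro!: exI[of _ "{}"])
next
  case (Suc m)
  let ?B = "rho``{s x} - s ` {2..<k + 2}"
  have class_X: "rho``{s x} \<subseteq> X" using eq unfolding equiv_def refl_on_def by blast
  have step: "inf_sat X rho (at_least_in_class x m (Suc k)) (s(k + 2 := a)) \<longleftrightarrow>
      (\<exists>F. F \<subseteq> ?B - {a} \<and> finite F \<and> card F = m)" if "a \<in> X" for a
  proof -
    have "range (s(k + 2 := a)) \<subseteq> X" using Suc.prems that by auto
    note IH = Suc.IH[OF this, of "Suc k"]
    have img: "(s(k + 2 := a)) ` {2..<Suc k + 2} = insert a (s ` {2..<k + 2})" by auto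
    have upd: "(s(k + 2 := a)) x = s x" using x by simp
    have "rho``{(s(k + 2 := a)) x} - (s(k + 2 := a)) ` {2..<Suc k + 2} = ?B - {a}"
      unfolding img upd by (rule Diff_insert)
    then show ?thesis using IH by (simp only:)
  qed
  have "inf_sat X rho (at_least_in_class x (Suc m) k) s \<longleftrightarrow>
      (\<exists>a\<in>X. a \<in> ?B \<and> inf_sat X rho (at_least_in_class x m (Suc k)) (s(k + 2 := a)))"
    using x by (auto simp: image_iff)
  also have "\<dots> \<longleftrightarrow> (\<exists>a\<in>?B. inf_sat X rho (at_least_in_class x m (Suc k)) (s(k + 2 := a)))"
    using class_X by blast
  also have "\<dots> \<longleftrightarrow> (\<exists>a\<in>?B. \<exists>F. F \<subseteq> ?B - {a} \<and> finite F \<and> card F = m)"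
    using step class_X by (intro bex_cong) auto
  also have "\<dots> \<longleftrightarrow> (\<exists>F. F \<subseteq> ?B \<and> finite F \<and> card F = Suc m)"
    by (rule ex_subset_card_Suc)
  finally show ?case .
qed

lemma infinite_iff_arbitrarily_large_subsets:
  "infinite A \<longleftrightarrow> (\<forall>m. \<exists>F. F \<subseteq> A \<and> finite F \<and> card F = m)"
proof
  assume "infinite A"
  then show "\<forall>m. \<exists>F. F \<subseteq> A \<and> finite F \<and> card F = m"
    using infinite_arbitrarily_large by blast
next
  assume large: "\<forall>m. \<exists>F. F \<subseteq> A \<and> finite F \<and> card F = m"
  show "infinite A"
  proof
    assume "finite A"
    obtain F where "F \<subseteq> A" "card F = Suc (card A)" using large[rule_format, of "Suc (card A)"] by blast
    then show False using card_mono[OF \<open>finite A\<close>] by (metis Suc_n_not_le_n)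
  qed
qed

definition infinite_class :: "nat \<Rightarrow> nat inf" where
  "infinite_class x = IConj UNIV (\<lambda>m. at_least_in_class x m 0)"

lemma infinite_class_sat:
  assumes "equiv X rho" and "x < 2" and "range s \<subseteq> X"
  shows "inf_sat X rho (infinite_class x) s \<longleftrightarrow> infinite (rho``{s x})"
proof -
  have "inf_sat X rho (at_least_in_class x m 0) s \<longleftrightarrow> (\<exists>F. F \<subseteq> rho``{s x} \<and> finite F \<and> card F = m)"
    for m using at_least_in_class_sat[OF assms, of m 0] by simp
  then show ?thesis unfolding infinite_class_def infinite_iff_arbitrarily_large_subsets by simp
qed

lemma inf_fv_infinite_class:
  assumes "x < 2"
  shows "inf_fv (infinite_class x) \<subseteq> {0, 1}"
proof -
  have "inf_fv (at_least_in_class x m 0) \<subseteq> {0, 1}" for m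
    using inf_fv_at_least_in_class[of x m 0] assms less_2_cases by auto
  then show ?thesis unfolding infinite_class_def by auto
qed

definition two_infinite_classes :: "nat inf" where
  "two_infinite_classes = IEx 0 (IEx 1
     (inf_and (INeg (IRel 0 1)) (inf_and (infinite_class 0) (infinite_class 1))))"

lemma inf_fv_two_infinite_classes: "inf_fv two_infinite_classes = {}"
  using inf_fv_infinite_class[of 0] inf_fv_infinite_class[of 1]
  unfolding two_infinite_classes_def by auto

lemma two_infinite_classes_sat:
  assumes eq: "equiv X rho" and s: "range s \<subseteq> X"
  shows "inf_sat X rho two_infinite_classes s \<longleftrightarrow>
    (\<exists>a\<in>X. \<exists>b\<in>X. (a, b) \<notin> rho \<and> infinite (rho``{a}) \<and> infinite (rho``{b}))"
proof -
  have "inf_sat X rho two_infinite_classes s \<longleftrightarrow> (\<exists>a\<in>X. \<exists>b\<in>X. (a, b) \<notin> rho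
      \<and> inf_sat X rho (infinite_class 0) (s(0 := a, 1 := b))
      \<and> inf_sat X rho (infinite_class 1) (s(0 := a, 1 := b)))"
    unfolding two_infinite_classes_def by simp
  also have "\<dots> \<longleftrightarrow> (\<exists>a\<in>X. \<exists>b\<in>X. (a, b) \<notin> rho \<and> infinite (rho``{a}) \<and> infinite (rho``{b}))"
  proof (intro bex_cong refl)
    fix a b assume "a \<in> X" "b \<in> X"
    then have r: "range (s(0 := a, 1 := b)) \<subseteq> X" using s by auto
    show "(a, b) \<notin> rho \<and> inf_sat X rho (infinite_class 0) (s(0 := a, 1 := b))
        \<and> inf_sat X rho (infinite_class 1) (s(0 := a, 1 := b))
      \<longleftrightarrow> (a, b) \<notin> rho \<and> infinite (rho``{a}) \<and> infinite (rho``{b})"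
      using infinite_class_sat[OF eq _ r, of 0] infinite_class_sat[OF eq _ r, of 1] by simp
  qed
  finally show ?thesis .
qed

lemma not_inf_equiv_one_vs_two_infinite_classes:
  assumes eX: "equiv X rho" and eY: "equiv Y sigma"
    and X': "{C \<in> X//rho. infinite C} = {X'}"
    and Y': "Y' \<in> Y//sigma" "Y'' \<in> Y//sigma" "Y' \<noteq> Y''" "infinite Y'" "infinite Y''"
  shows "\<not> inf_equiv TYPE(nat) X rho Y sigma"
proof
  assume equiv: "inf_equiv TYPE(nat) X rho Y sigma"
  obtain y' y'' where y: "y' \<in> Y'" "y'' \<in> Y''" using Y'(4,5) by (metis finite.emptyI ex_in_conv)
  have classes: "sigma``{y'} = Y'" "sigma``{y''} = Y''"
    using equiv_class_of_member[OF eY Y'(1) y(1)] equiv_class_of_member[OF eY Y'(2) y(2)] .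
  have "y' \<in> Y" "y'' \<in> Y" using y Y'(1,2) in_quotient_imp_subset[OF eY] by blast+
  moreover have "(y', y'') \<notin> sigma"
    using classes Y'(3) eq_equiv_class_iff[OF eY \<open>y' \<in> Y\<close> \<open>y'' \<in> Y\<close>] by simp
  ultimately have Y_sat: "inf_sat Y sigma two_infinite_classes t" if "range t \<subseteq> Y" for t
    using two_infinite_classes_sat[OF eY that] classes Y'(4,5) by auto
  have X'_mem: "X' \<in> X//rho" "infinite X'" using X' by auto
  then obtain x0 where x0: "x0 \<in> X" "X' = rho``{x0}" by (elim quotientE)
  have X_unsat: "\<not> inf_sat X rho two_infinite_classes (\<lambda>_. x0)"
  proof
    assume "inf_sat X rho two_infinite_classes (\<lambda>_. x0)"
    then obtain a b where ab: "a \<in> X" "b \<in> X" "(a, b) \<notin> rho" "infinite (rho``{a})" "infinite (rho``{b})"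
      using two_infinite_classes_sat[OF eX, of "\<lambda>_. x0"] x0(1) by auto
    have "rho``{a} \<in> {C \<in> X//rho. infinite C}" "rho``{b} \<in> {C \<in> X//rho. infinite C}"
      using ab by (auto intro: quotientI)
    then have "rho``{a} = rho``{b}" unfolding X' by simp
    then show False using ab eq_equiv_class_iff[OF eX] by blast
  qed
  have "inf_models Y sigma two_infinite_classes" unfolding inf_models_def using Y_sat by blast
  moreover have "\<not> inf_models X rho two_infinite_classes"
    unfolding inf_models_def using X_unsat x0(1) by auto
  moreover have "inf_models X rho two_infinite_classes \<longleftrightarrow> inf_models Y sigma two_infinite_classes"
    using equiv inf_fv_two_infinite_classes unfolding inf_equiv_def by simp
  ultimately show False by simp
qed

section \<open>Condensations\<close>

lemma countable_finite_classes:
  assumes eq: "equiv X rho" and singles: "countable {C \<in> X//rho. card C = 1}"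
    and at_most_one: "\<forall>n\<ge>2. \<exists>!C. C \<in> X//rho \<and> finite C \<and> card C = n"
  shows "countable {C \<in> X//rho. finite C}"
proof -
  let ?Big = "{C \<in> X//rho. finite C \<and> card C \<ge> 2}"
  have "inj_on card ?Big"
  proof (rule inj_onI)
    fix C D assume C: "C \<in> ?Big" and D: "D \<in> ?Big" and "card C = card D"
    have uniq: "\<exists>!E. E \<in> X//rho \<and> finite E \<and> card E = card C"
      by (rule at_most_one[rule_format]) (use C in simp)
    show "C = D" by (rule ex1_unique[OF uniq]) (use C D \<open>card C = card D\<close> in auto)
  qed
  then have "countable ?Big" by (rule countableI)
  with singles have "countable ({C \<in> X//rho. card C = 1} \<union> ?Big)" by (rule countable_Un)
  moreover have "{C \<in> X//rho. finite C} \<subseteq> {C \<in> X//rho. card C = 1} \<union> ?Big"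
  proof
    fix C assume C: "C \<in> {C \<in> X//rho. finite C}"
    then have "C \<noteq> {}" using in_quotient_imp_non_empty[OF eq] by blast
    then have "card C \<noteq> 0" using C by simp
    then show "C \<in> {C \<in> X//rho. card C = 1} \<union> ?Big" using C by auto
  qed
  ultimately show ?thesis by (rule countable_subset[rotated])
qed

lemma countable_outside_infinite_class:
  assumes eq: "equiv X rho" and fin: "countable {C \<in> X//rho. finite C}"
    and X': "{C \<in> X//rho. infinite C} = {X'}"
  shows "countable (X - X')"
proof -
  have "X - X' \<subseteq> (\<Union>C\<in>{C \<in> X//rho. finite C}. C)"
  proof
    fix x assume x: "x \<in> X - X'"
    then have x_class: "x \<in> rho``{x}" "rho``{x} \<in> X//rho" using equiv_class_self[OF eq] quotientI by auto
    have "finite (rho``{x})"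
    proof (rule ccontr)
      assume "infinite (rho``{x})"
      then have "rho``{x} = X'" using X' x_class(2) by blast
      then show False using x x_class(1) by blast
    qed
    then show "x \<in> (\<Union>C\<in>{C \<in> X//rho. finite C}. C)" using x_class by blast
  qed
  moreover have "countable (\<Union>C\<in>{C \<in> X//rho. finite C}. C)"
    using fin by (rule countable_UN) (simp add: countable_finite)
  ultimately show ?thesis by (rule countable_subset)
qed

lemma no_condensation:
  assumes eX: "equiv X rho" and eY: "equiv Y sigma"
    and X': "X' \<in> X//rho" "countable (X - X')"
    and Y': "Y' \<in> Y//sigma" "Y'' \<in> Y//sigma" "Y' \<noteq> Y''" "uncountable Y'" "uncountable Y''"
  shows "\<not> condensation X rho Y sigma F"
proof
  assume "condensation X rho Y sigma F"
  then have bij: "bij_betw F X Y"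
    and hom: "\<And>x x'. x \<in> X \<Longrightarrow> x' \<in> X \<Longrightarrow> (x, x') \<in> rho \<Longrightarrow> (F x, F x') \<in> sigma"
    unfolding condensation_def by auto
  obtain x0 where x0: "x0 \<in> X" "X' = rho``{x0}" using X'(1) by (elim quotientE)
  let ?D = "sigma``{F x0}"
  have D: "?D \<in> Y//sigma" using bij_betwE[OF bij] x0(1) by (blast intro: quotientI)
  have image: "F ` X' \<subseteq> ?D" using hom x0 in_quotient_imp_subset[OF eX X'(1)] by auto
  obtain E where E: "E \<in> Y//sigma" "E \<noteq> ?D" "uncountable E"
  proof (cases "Y' = ?D")
    case True
    then show ?thesis using that Y'(2,3,5) by simp
  next
    case False
    then show ?thesis using that Y'(1,4) by simp
  qed
  have "E \<subseteq> F ` (X - X')"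
  proof
    fix y assume y: "y \<in> E"
    then have "y \<in> Y" using in_quotient_imp_subset[OF eY E(1)] by blast
    then obtain x where x: "x \<in> X" "y = F x" using bij unfolding bij_betw_def by blast
    have "y \<notin> ?D" using quotient_disj[OF eY E(1) D] E(2) y by blast
    then show "y \<in> F ` (X - X')" using image x by blast
  qed
  then have "countable E" using countable_image[OF X'(2)] by (rule countable_subset)
  then show False using E(3) by blast
qed

theorem mainTheorem16:
  fixes X :: "'a set" and rho :: "('a \<times> 'a) set"
    and Y :: "'b set" and sigma :: "('b \<times> 'b) set"
  assumes "has_size_omega1 X" and "has_size_omega1 Y"
    and "equiv X rho" and "equiv Y sigma"
    and "countable {C \<in> X // rho. card C = 1}" and "infinite {C \<in> X // rho. card C = 1}"
    and "countable {C \<in> Y // sigma. card C = 1}" and "infinite {C \<in> Y // sigma. card C = 1}"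
    and "\<forall>n\<ge>2. \<exists>!C. C \<in> X // rho \<and> finite C \<and> card C = n"
    and "\<forall>n\<ge>2. \<exists>!C. C \<in> Y // sigma \<and> finite C \<and> card C = n"
    and "\<exists>X'. {C \<in> X // rho. infinite C} = {X'} \<and> has_size_omega1 X'"
    and "\<exists>Y' Y''. Y' \<noteq> Y'' \<and> {C \<in> Y // sigma. infinite C} = {Y', Y''}
            \<and> has_size_omega1 Y' \<and> has_size_omega1 Y''"
  shows "elem_equiv X rho Y sigma
    \<and> pos_equiv TYPE('i) X rho Y sigma
    \<and> \<not> cond_equiv X rho Y sigma
    \<and> \<not> inf_equiv TYPE(nat) X rho Y sigma"
proof -
  note eX = assms(3) and eY = assms(4)
  obtain X' where X': "{C \<in> X // rho. infinite C} = {X'}" "has_size_omega1 X'" using assms(11) by blast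
  obtain Y' Y'' where Y': "Y' \<noteq> Y''" "{C \<in> Y // sigma. infinite C} = {Y', Y''}"
    "has_size_omega1 Y'" "has_size_omega1 Y''" using assms(12) by blast
  have X'_class: "X' \<in> X//rho" "infinite X'" using X'(1) by auto
  have Y'_class: "Y' \<in> Y//sigma" "infinite Y'" "Y'' \<in> Y//sigma" "infinite Y''" using Y'(2) by auto
  have singles: "infinite (singletons X rho)" "infinite (singletons Y sigma)"
    using infinite_singletons eX eY assms(6,8) by blast+
  have std: "standard_finite_classes X rho" "standard_finite_classes Y sigma"
    unfolding standard_finite_classes_def using eX eY singles assms(9,10) by blast+
  have countable_rest: "countable (X - X')"
    using countable_outside_infinite_class[OF eX countable_finite_classes[OF eX assms(5,9)] X'(1)] .
  have "X \<noteq> {}" "Y \<noteq> {}" using assms(1,2) has_size_omega1_uncountable by auto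
  then have "elem_equiv X rho Y sigma" by (rule standard_finite_classes_elem_equiv[OF std])
  moreover have "pos_equiv TYPE('i) X rho Y sigma"
    by (rule pos_equiv_if_singletons_and_infinite_class[OF eX eY singles X'_class Y'_class(1,2)])
  moreover have "\<not> cond_equiv X rho Y sigma"
    using no_condensation[OF eX eY X'_class(1) countable_rest Y'_class(1,3) Y'(1)] Y'(3,4)
      has_size_omega1_uncountable
    unfolding cond_equiv_def by blast
  moreover have "\<not> inf_equiv TYPE(nat) X rho Y sigma"
    using not_inf_equiv_one_vs_two_infinite_classes[OF eX eY X'(1) Y'_class(1,3) Y'(1) Y'_class(2,4)] .
  ultimately show ?thesis by blast
qed

end
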